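(* Let $q$ be a prime power, let $\alpha$ be a primitive element of $\mathbb{F}_{q^n}$, and let $1\le t_1<\cdots<t_r<n$ be divisors of $n$ such that $t_i$ divides $t_{i+1}$ for $1\le i\le r-1$. Let $\mathcal{F}=(\mathbb{F}_{q^{t_1}},\ldots,\mathbb{F}_{q^{t_r}})$ be the Galois flag of this type on $\mathbb{F}_{q^n}$. Let $\beta\in\mathbb{F}_{q^n}^*$ with $\langle\beta\rangle=\langle\alpha^l\rangle$ for a divisor $l$ of $q^n-1$. For $1\le i\le r$ put $c_i=\frac{q^n-1}{q^{t_i}-1}$ and $l_i=\mathrm{lcm}(l,c_i)$. Then: (1) $d_f(\mathrm{Orb}_\beta(\mathcal{F}))=0$ if and only if $l_1=l_r=l$; (2) $d_f(\mathrm{Orb}_\beta(\mathcal{F}))=2\sum_{i=1}^r t_i$ if and only if $l_1=l_r\neq l$; (3) $d_f(\mathrm{Orb}_\beta(\mathcal{F}))=2\sum_{i=1}^{j-1}t_i$ if and only if $l_1\neq l_r$ and $j\in\{2,\ldots,r\}$ is the minimum index such that $l_1\neq l_j$.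
   Context: $\mathbb{F}_{q^n}$ is regarded as an $\mathbb{F}_q$-vector space. For $\gamma\in\mathbb{F}_{q^n}^*$, $\mathcal{U}\gamma=\{u\gamma:u\in\mathcal{U}\}$ and $\mathcal{F}\gamma=(\mathcal{F}_1\gamma,\ldots,\mathcal{F}_r\gamma)$. For $\beta$ of multiplicative order $|\beta|$, $\mathrm{Orb}_\beta(\mathcal{F})=\{\mathcal{F}\beta^j:0\le j\le|\beta|-1\}$. Subspace distance: $d_S(\mathcal{U},\mathcal{V})=\dim(\mathcal{U}+\mathcal{V})-\dim(\mathcal{U}\cap\mathcal{V})$; flag distance $d_f(\mathcal{F},\mathcal{F}')=\sum_{i=1}^r d_S(\mathcal{F}_i,\mathcal{F}'_i)$. The minimum distance $d_f(\mathcal{C})$ of a set of flags is the minimum flag distance between distinct elements, and $0$ if $|\mathcal{C}|=1$. *)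

theory Defs
  imports "HOL-Computational_Algebra.Primes"
begin

definition prime_power :: "nat \<Rightarrow> bool" where
  "prime_power q \<longleftrightarrow> (\<exists>p k. prime (p::nat) \<and> k \<ge> 1 \<and> q = p ^ k)"

(* The subfield F_{q^t} of a finite field, as the fixed points of x \<mapsto> x^(q^t) *)
definition subfield_pow :: "nat \<Rightarrow> 'a::field set" where
  "subfield_pow m = {x. x ^ m = x}"

definition mord :: "'a::field \<Rightarrow> nat" where
  "mord x = (LEAST k. k > 0 \<and> x ^ k = 1)"

definition cyc :: "'a::field \<Rightarrow> 'a set" where
  "cyc x = {x ^ k | k. True}"

definition primitive_elem :: "'a::{finite,field} \<Rightarrow> bool" where
  "primitive_elem a \<longleftrightarrow> cyc a = UNIV - {0}"

definition lin_indep_over :: "'a::field set \<Rightarrow> 'a set \<Rightarrow> bool" where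
  "lin_indep_over K S \<longleftrightarrow> finite S \<and>
     (\<forall>c. (\<forall>s\<in>S. c s \<in> K) \<longrightarrow> (\<Sum>s\<in>S. c s * s) = 0 \<longrightarrow> (\<forall>s\<in>S. c s = 0))"

definition dim_over :: "'a::{finite,field} set \<Rightarrow> 'a set \<Rightarrow> nat" where
  "dim_over K U = Max (card ` {S. S \<subseteq> U \<and> lin_indep_over K S})"

definition sub_sum :: "'a::field set \<Rightarrow> 'a set \<Rightarrow> 'a set" where
  "sub_sum U V = {u + v | u v. u \<in> U \<and> v \<in> V}"

definition subspace_dist :: "'a::{finite,field} set \<Rightarrow> 'a set \<Rightarrow> 'a set \<Rightarrow> nat" where
  "subspace_dist K U V = dim_over K (sub_sum U V) - dim_over K (U \<inter> V)"

definition flag_dist :: "'a::{finite,field} set \<Rightarrow> 'a set list \<Rightarrow> 'a set list \<Rightarrow> nat" where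
  "flag_dist K F G = (\<Sum>i<length F. subspace_dist K (F ! i) (G ! i))"

definition flag_scale :: "'a set list \<Rightarrow> 'a::field \<Rightarrow> 'a set list" where
  "flag_scale F g = map (\<lambda>U. (\<lambda>u. u * g) ` U) F"

definition orbit_flag :: "'a::field \<Rightarrow> 'a set list \<Rightarrow> 'a set list set" where
  "orbit_flag b F = {flag_scale F (b ^ j) | j. j \<le> mord b - 1}"

definition min_flag_dist :: "'a::{finite,field} set \<Rightarrow> 'a set list set \<Rightarrow> nat" where
  "min_flag_dist K C = (if card C = 1 then 0
      else Min {flag_dist K A B | A B. A \<in> C \<and> B \<in> C \<and> A \<noteq> B})"

end

theory Submission
  imports Defs "HOL-Number_Theory.Residues" "HOL-Library.FuncSet"
begin

text \<open>Scaling the Galois flag by g replaces each subfield F_i = GF(q^t_i) by the GF(q)-subspace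
  F_i g. Two such subspaces F g and F g' coincide if g'/g \<in> F and otherwise meet only in 0, so
  the flags scaled by x and y are at distance the sum of 2 t_i over the i with y/x \<notin> F_i.
  The orbit of \<beta> consists of the scalings by \<alpha>^(l k), and \<alpha>^(l k) \<in> F_i iff c_i divides l k
  iff l_i divides l k. Since the subfields are nested, l_r | ... | l_1, and l divides every l_i;
  so the least nonzero distance is 2 (t_1 + ... + t_(j-1)) for the first j with l_j \<noteq> l_1
  (j = r + 1 if there is none), attained at l k = l_j.\<close>

section \<open>Subfields of a finite field\<close>

lemma finite_field_pow_card_minus_one:
  fixes x :: "'a::{finite,field}"
  assumes "x \<noteq> 0"
  shows "x ^ (card (UNIV :: 'a set) - 1) = 1"
proof -
  have "(\<Prod>y\<in>UNIV - {0}. x * y) = x ^ (card (UNIV :: 'a set) - 1) * \<Prod>(UNIV - {0 :: 'a})"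
    by (simp add: prod.distrib)
  moreover have "(\<Prod>y\<in>UNIV - {0}. x * y) = \<Prod>(UNIV - {0 :: 'a})"
    by (rule prod.reindex_bij_witness[of _ "\<lambda>y. y / x" "\<lambda>y. x * y"]) (use assms in auto)
  moreover have "\<Prod>(UNIV - {0 :: 'a}) \<noteq> 0" by simp
  ultimately show ?thesis by simp
qed

lemma card_UNIV_field_gt_1: "1 < card (UNIV :: 'a::{finite,field} set)"
proof -
  have "card {0, 1 :: 'a} \<le> card (UNIV :: 'a set)" by (intro card_mono) auto
  then show ?thesis by simp
qed

lemma CHAR_eq_of_card:
  assumes "prime p" "card (UNIV :: 'a::{finite,field} set) = p ^ e"
  shows "CHAR('a) = p"
proof -
  have prime_CHAR: "prime CHAR('a)"
    by (intro prime_CHAR_semidom finite_imp_CHAR_pos) simp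
  have "CHAR('a) dvd p ^ e" using CHAR_dvd_CARD[where 'a='a] assms(2) by simp
  then have "CHAR('a) dvd p" using prime_CHAR prime_dvd_power by blast
  then show ?thesis using prime_CHAR assms(1) by (simp add: primes_dvd_imp_eq)
qed

lemma freshmans_dream_diff:
  fixes x y :: "'a::comm_ring_1"
  assumes "prime CHAR('a)" "m = CHAR('a) ^ j"
  shows "(x - y) ^ m = x ^ m - y ^ m"
proof -
  have "x ^ m = ((x - y) + y) ^ m" by simp
  also have "\<dots> = (x - y) ^ m + y ^ m" by (rule freshmans_dream'[OF assms])
  finally show ?thesis by simp
qed

definition is_subfield :: "'a::field set \<Rightarrow> bool" where
  "is_subfield K \<longleftrightarrow> 1 \<in> K \<and> (\<forall>x\<in>K. \<forall>y\<in>K. x - y \<in> K \<and> x * y \<in> K \<and> x / y \<in> K)"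

lemma
  assumes "is_subfield K"
  shows subfield_one: "1 \<in> K"
    and subfield_diff: "x \<in> K \<Longrightarrow> y \<in> K \<Longrightarrow> x - y \<in> K"
    and subfield_mult: "x \<in> K \<Longrightarrow> y \<in> K \<Longrightarrow> x * y \<in> K"
    and subfield_divide: "x \<in> K \<Longrightarrow> y \<in> K \<Longrightarrow> x / y \<in> K"
  using assms by (auto simp: is_subfield_def)

lemma subfield_zero: "is_subfield K \<Longrightarrow> 0 \<in> K"
  by (metis subfield_one subfield_diff diff_self)

lemma subfield_uminus: "is_subfield K \<Longrightarrow> x \<in> K \<Longrightarrow> - x \<in> K"
  by (metis subfield_zero subfield_diff diff_0)

lemma subfield_add: "is_subfield K \<Longrightarrow> x \<in> K \<Longrightarrow> y \<in> K \<Longrightarrow> x + y \<in> K"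
  by (metis subfield_uminus subfield_diff diff_minus_eq_add)

lemma is_subfield_subfield_pow:
  assumes "prime CHAR('a::field)" "m = CHAR('a) ^ j"
  shows "is_subfield (subfield_pow m :: 'a set)"
  unfolding is_subfield_def subfield_pow_def
  using freshmans_dream_diff[OF assms] by (simp add: power_mult_distrib power_divide)

lemma subfield_pow_subset_pow: "subfield_pow m \<subseteq> (subfield_pow (m ^ s) :: 'a::field set)"
proof
  fix x :: 'a assume "x \<in> subfield_pow m"
  then show "x \<in> subfield_pow (m ^ s)"
    unfolding subfield_pow_def by (induction s) (auto simp: power_mult)
qed

lemma subfield_pow_mono:
  assumes "a dvd b"
  shows "subfield_pow (m ^ a) \<subseteq> (subfield_pow (m ^ b) :: 'a::field set)"
  using subfield_pow_subset_pow[of "m ^ a" "b div a"] assms by (simp flip: power_mult)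

section \<open>Dimension over a subfield\<close>

definition is_subspace :: "'a::field set \<Rightarrow> 'a set \<Rightarrow> bool" where
  "is_subspace K U \<longleftrightarrow> 0 \<in> U \<and> (\<forall>u\<in>U. \<forall>v\<in>U. u + v \<in> U) \<and> (\<forall>c\<in>K. \<forall>u\<in>U. c * u \<in> U)"

definition span_over :: "'a::field set \<Rightarrow> 'a set \<Rightarrow> 'a set" where
  "span_over K S = (\<lambda>c. \<Sum>s\<in>S. c s * s) ` (S \<rightarrow>\<^sub>E K)"

lemma card_span_over_le:
  fixes K :: "'a::{finite,field} set"
  assumes "finite S"
  shows "card (span_over K S) \<le> card K ^ card S"
proof -
  have "card (span_over K S) \<le> card (S \<rightarrow>\<^sub>E K)"
    unfolding span_over_def by (rule card_image_le) (simp add: assms finite_PiE)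
  then show ?thesis by (simp add: card_funcsetE[OF assms])
qed

lemma span_over_subset_subspace:
  assumes "is_subspace K U" "finite S" "S \<subseteq> U"
  shows "span_over K S \<subseteq> U"
proof -
  have "(\<Sum>s\<in>S. c s * s) \<in> U" if "\<forall>s\<in>S. c s \<in> K" for c
    using assms(2,3) that
  proof (induction S rule: finite_induct)
    case empty then show ?case using assms(1) by (simp add: is_subspace_def)
  next
    case (insert x F)
    then show ?case using assms(1) unfolding is_subspace_def by simp
  qed
  then show ?thesis unfolding span_over_def by auto
qed

context
  fixes K :: "'a::{finite,field} set"
  assumes K: "is_subfield K"
begin

lemma inj_on_lin_comb:
  assumes "lin_indep_over K S"
  shows "inj_on (\<lambda>c. \<Sum>s\<in>S. c s * s) (S \<rightarrow>\<^sub>E K)"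
proof (rule inj_onI)
  fix c c' assume c: "c \<in> S \<rightarrow>\<^sub>E K" and c': "c' \<in> S \<rightarrow>\<^sub>E K"
    and eq: "(\<Sum>s\<in>S. c s * s) = (\<Sum>s\<in>S. c' s * s)"
  have indep: "\<forall>s\<in>S. d s \<in> K \<Longrightarrow> (\<Sum>s\<in>S. d s * s) = 0 \<Longrightarrow> \<forall>s\<in>S. d s = 0" for d
    using assms unfolding lin_indep_over_def by blast
  have "(\<Sum>s\<in>S. (c s - c' s) * s) = 0"
    using eq by (simp add: sum_subtractf left_diff_distrib)
  moreover have "\<forall>s\<in>S. c s - c' s \<in> K" using c c' subfield_diff[OF K] by auto
  ultimately have "\<forall>s\<in>S. c s - c' s = 0" by (rule indep[rotated])
  then show "c = c'" by (intro PiE_ext[OF c c']) simp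
qed

lemma card_span_over:
  assumes "lin_indep_over K S"
  shows "card (span_over K S) = card K ^ card S"
  using card_image[OF inj_on_lin_comb[OF assms]] assms
  by (simp add: span_over_def lin_indep_over_def card_funcsetE)

lemma mem_span_over_self:
  assumes "finite S" "u \<in> S"
  shows "u \<in> span_over K S"
proof -
  define c where "c = restrict (\<lambda>s. if s = u then 1 else 0 :: 'a) S"
  have c_K: "c \<in> S \<rightarrow>\<^sub>E K" unfolding c_def using subfield_zero[OF K] subfield_one[OF K] by auto
  have "(\<Sum>s\<in>S. c s * s) = (\<Sum>s\<in>S. if s = u then s else 0)"
    by (intro sum.cong) (auto simp: c_def)
  then have "(\<Sum>s\<in>S. c s * s) = u" using assms by simp
  then show ?thesis unfolding span_over_def by (rule image_eqI[OF sym c_K])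
qed

lemma mem_span_over_if_dependent:
  assumes indep: "lin_indep_over K S" and dep: "\<not> lin_indep_over K (insert u S)"
  shows "u \<in> span_over K S"
proof -
  have fin: "finite S" using indep by (simp add: lin_indep_over_def)
  obtain c where cK: "\<forall>s\<in>insert u S. c s \<in> K"
    and c0: "(\<Sum>s\<in>insert u S. c s * s) = 0" and nz: "\<exists>s\<in>insert u S. c s \<noteq> 0"
    using dep fin unfolding lin_indep_over_def by blast
  have "u \<notin> S" using dep indep by (metis insert_absorb)
  then have csum: "(\<Sum>s\<in>S. c s * s) = - (c u * u)"
    using c0 fin by (simp add: eq_neg_iff_add_eq_0 add.commute)
  have cu: "c u \<noteq> 0"
  proof
    assume "c u = 0"
    then have "\<forall>s\<in>S. c s = 0" using csum cK indep unfolding lin_indep_over_def by simp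
    then show False using nz \<open>c u = 0\<close> by auto
  qed
  define f where "f = restrict (\<lambda>s. - c s / c u) S"
  have f_K: "f \<in> S \<rightarrow>\<^sub>E K"
    unfolding f_def using cK subfield_divide[OF K] subfield_uminus[OF K] by auto
  have "(\<Sum>s\<in>S. f s * s) = - (\<Sum>s\<in>S. c s * s) / c u"
    by (simp add: f_def sum_divide_distrib sum_negf cong: sum.cong)
  also have "\<dots> = u" using csum cu by simp
  finally show ?thesis unfolding span_over_def by (rule image_eqI[OF sym f_K])
qed

text \<open>A maximal independent subset spans.\<close>
lemma exists_spanning_lin_indep:
  assumes "is_subspace K U"
  shows "\<exists>S\<subseteq>U. lin_indep_over K S \<and> card U \<le> card K ^ card S"
proof -
  define Ind where "Ind = {S. S \<subseteq> U \<and> lin_indep_over K S}"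
  have "{} \<in> Ind" unfolding Ind_def lin_indep_over_def by simp
  then have "Max (card ` Ind) \<in> card ` Ind" by (intro Max_in) auto
  then obtain S where S: "S \<in> Ind" "card S = Max (card ` Ind)" by auto
  have max: "card S' \<le> card S" if "S' \<in> Ind" for S'
    unfolding S(2) using that by (intro Max_ge) auto
  have SU: "S \<subseteq> U" and indep: "lin_indep_over K S" and fin: "finite S"
    using S(1) by (auto simp: Ind_def lin_indep_over_def)
  have "U \<subseteq> span_over K S"
  proof
    fix u assume "u \<in> U"
    show "u \<in> span_over K S"
    proof (cases "u \<in> S")
      case False
      then have "insert u S \<notin> Ind" using max[of "insert u S"] fin by auto
      then show ?thesis using \<open>u \<in> U\<close> SU by (intro mem_span_over_if_dependent indep) (auto simp: Ind_def)
    qed (rule mem_span_over_self[OF fin])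
  qed
  then have "card U \<le> card (span_over K S)" by (intro card_mono) auto
  also have "\<dots> \<le> card K ^ card S" by (rule card_span_over_le[OF fin])
  finally show ?thesis using SU indep by blast
qed

lemma dim_over_eq_of_card:
  assumes U: "is_subspace K U" and card_U: "card U = card K ^ m"
  shows "dim_over K U = m"
proof -
  have "card {0, 1 :: 'a} \<le> card K"
    using subfield_zero[OF K] subfield_one[OF K] by (intro card_mono) auto
  then have card_K: "card K > 1" by simp
  have le_m: "card S \<le> m" if "S \<subseteq> U" "lin_indep_over K S" for S
  proof -
    have "card (span_over K S) \<le> card U"
      using span_over_subset_subspace[OF U _ that(1)] that(2)
      by (intro card_mono) (auto simp: lin_indep_over_def)
    then have "card K ^ card S \<le> card K ^ m"
      using card_span_over[OF that(2)] card_U by simp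
    then show ?thesis using card_K by simp
  qed
  obtain S where S: "S \<subseteq> U" "lin_indep_over K S" "card U \<le> card K ^ card S"
    using exists_spanning_lin_indep[OF U] by blast
  have "card S = m" using le_m[OF S(1,2)] S(3) card_U card_K by (simp add: le_antisym)
  then show ?thesis
    unfolding dim_over_def using S le_m by (intro Max_eqI) auto
qed

end

section \<open>Scaled subfields and flags\<close>

lemma is_subspace_sub_sum:
  assumes U: "is_subspace K U" and V: "is_subspace K V"
  shows "is_subspace K (sub_sum U V)"
  unfolding is_subspace_def
proof (intro conjI ballI)
  show "0 \<in> sub_sum U V"
    using U V unfolding sub_sum_def is_subspace_def by force
next
  fix x y assume "x \<in> sub_sum U V" "y \<in> sub_sum U V"
  then obtain a b c d where "a \<in> U" "b \<in> V" "c \<in> U" "d \<in> V" "x = a + b" "y = c + d"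
    unfolding sub_sum_def by blast
  moreover have "x + y = (a + c) + (b + d)" using calculation by (simp add: algebra_simps)
  ultimately show "x + y \<in> sub_sum U V"
    using U V unfolding sub_sum_def is_subspace_def by blast
next
  fix c x assume "c \<in> K" "x \<in> sub_sum U V"
  then obtain a b where "a \<in> U" "b \<in> V" "x = a + b"
    unfolding sub_sum_def by blast
  moreover have "c * x = c * a + c * b" using calculation by (simp add: algebra_simps)
  ultimately show "c * x \<in> sub_sum U V"
    using U V \<open>c \<in> K\<close> unfolding sub_sum_def is_subspace_def by blast
qed

lemma sub_sum_self:
  assumes "is_subspace K U"
  shows "sub_sum U U = U"
proof
  show "sub_sum U U \<subseteq> U" using assms unfolding sub_sum_def is_subspace_def by auto
  show "U \<subseteq> sub_sum U U"
  proof
    fix u assume "u \<in> U"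
    then have "u = u + 0 \<and> u \<in> U \<and> 0 \<in> U" using assms by (simp add: is_subspace_def)
    then show "u \<in> sub_sum U U" unfolding sub_sum_def by blast
  qed
qed

lemma subspace_dist_self: "is_subspace K U \<Longrightarrow> subspace_dist K U U = 0"
  by (simp add: subspace_dist_def sub_sum_self)

lemma is_subspace_scaled:
  assumes "is_subfield F" "K \<subseteq> F"
  shows "is_subspace K ((\<lambda>u. u * g) ` F)"
  unfolding is_subspace_def
proof (intro conjI ballI)
  show "0 \<in> (\<lambda>u. u * g) ` F" using subfield_zero[OF assms(1)] by force
next
  fix x y assume "x \<in> (\<lambda>u. u * g) ` F" "y \<in> (\<lambda>u. u * g) ` F"
  then obtain u v where "u \<in> F" "v \<in> F" "x + y = (u + v) * g" by (auto simp: distrib_right)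
  then show "x + y \<in> (\<lambda>u. u * g) ` F" using subfield_add[OF assms(1)] by blast
next
  fix c x assume "c \<in> K" "x \<in> (\<lambda>u. u * g) ` F"
  then obtain u where "u \<in> F" "c * x = (c * u) * g" by (auto simp: mult.assoc)
  then show "c * x \<in> (\<lambda>u. u * g) ` F" using subfield_mult[OF assms(1)] \<open>c \<in> K\<close> assms(2) by blast
qed

lemma scaled_subfield_subset:
  assumes "is_subfield F" "g' \<noteq> 0" "g / g' \<in> F"
  shows "(\<lambda>u. u * g) ` F \<subseteq> (\<lambda>u. u * g') ` F"
proof
  fix x assume "x \<in> (\<lambda>u. u * g) ` F"
  then obtain u where "u \<in> F" "x = (u * (g / g')) * g'" using assms(2) by auto
  then show "x \<in> (\<lambda>u. u * g') ` F" using subfield_mult[OF assms(1)] assms(3) by blast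
qed

lemma scaled_subfield_eq_iff:
  assumes F: "is_subfield F" and "g \<noteq> 0" "g' \<noteq> 0"
  shows "(\<lambda>u. u * g) ` F = (\<lambda>u. u * g') ` F \<longleftrightarrow> g' / g \<in> F"
proof
  assume "(\<lambda>u. u * g) ` F = (\<lambda>u. u * g') ` F"
  moreover have "g' \<in> (\<lambda>u. u * g') ` F" using subfield_one[OF F] by force
  ultimately obtain u where "u \<in> F" "g' = u * g" by auto
  then show "g' / g \<in> F" using assms by simp
next
  assume "g' / g \<in> F"
  moreover have "g / g' = 1 / (g' / g)" by simp
  ultimately have "g / g' \<in> F" using subfield_divide[OF F] subfield_one[OF F] by metis
  then show "(\<lambda>u. u * g) ` F = (\<lambda>u. u * g') ` F"
    using scaled_subfield_subset[OF F] \<open>g' / g \<in> F\<close> assms by (intro equalityI) simp_all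
qed

context
  fixes F :: "'a::{finite,field} set" and g g' :: 'a
  assumes F: "is_subfield F" and nonzero: "g \<noteq> 0" "g' \<noteq> 0" and quotient: "g' / g \<notin> F"
begin

lemma scaled_subfield_inter:
  "(\<lambda>u. u * g) ` F \<inter> (\<lambda>u. u * g') ` F = {0}"
proof
  show "{0} \<subseteq> (\<lambda>u. u * g) ` F \<inter> (\<lambda>u. u * g') ` F" using subfield_zero[OF F] by force
  show "(\<lambda>u. u * g) ` F \<inter> (\<lambda>u. u * g') ` F \<subseteq> {0}"
  proof
    fix x assume "x \<in> (\<lambda>u. u * g) ` F \<inter> (\<lambda>u. u * g') ` F"
    then obtain u v where uv: "u \<in> F" "v \<in> F" "x = u * g" "x = v * g'" by blast
    have "v = 0"
    proof (rule ccontr)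
      assume "v \<noteq> 0"
      then have "g' / g = u / v" using uv nonzero by (simp add: field_simps)
      then show False using subfield_divide[OF F uv(1,2)] quotient by simp
    qed
    then show "x \<in> {0}" using uv by simp
  qed
qed

lemma card_sub_sum_scaled:
  "card (sub_sum ((\<lambda>u. u * g) ` F) ((\<lambda>u. u * g') ` F)) = card F * card F"
proof -
  have sum_eq: "sub_sum ((\<lambda>u. u * g) ` F) ((\<lambda>u. u * g') ` F) = (\<lambda>(u, v). u * g + v * g') ` (F \<times> F)"
    unfolding sub_sum_def by auto
  have "inj_on (\<lambda>(u, v). u * g + v * g') (F \<times> F)"
  proof (rule inj_onI, clarsimp)
    fix u v u' v' assume uv: "u \<in> F" "v \<in> F" "u' \<in> F" "v' \<in> F"
      and "u * g + v * g' = u' * g + v' * g'"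
    then have eq: "(u - u') * g = (v' - v) * g'" by (simp add: algebra_simps)
    have "v' = v"
    proof (rule ccontr)
      assume "v' \<noteq> v"
      then have "g' / g = (u - u') / (v' - v)" using eq nonzero by (simp add: field_simps)
      then show False
        using quotient subfield_divide[OF F] subfield_diff[OF F] uv by metis
    qed
    then show "u = u' \<and> v = v'" using eq nonzero by simp
  qed
  then show ?thesis unfolding sum_eq by (simp add: card_image card_cartesian_product)
qed

end

lemma subspace_dist_scaled_subfield:
  assumes K: "is_subfield K" and F: "is_subfield F" and "K \<subseteq> F" and card_F: "card F = card K ^ t"
    and nonzero: "g \<noteq> 0" "g' \<noteq> 0"
  shows "subspace_dist K ((\<lambda>u. u * g) ` F) ((\<lambda>u. u * g') ` F) = (if g' / g \<in> F then 0 else 2 * t)"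
proof (cases "g' / g \<in> F")
  case True
  then show ?thesis
    using scaled_subfield_eq_iff[OF F nonzero]
    by (simp add: subspace_dist_self is_subspace_scaled[OF F \<open>K \<subseteq> F\<close>])
next
  case False
  have "dim_over K (sub_sum ((\<lambda>u. u * g) ` F) ((\<lambda>u. u * g') ` F)) = 2 * t"
    using card_sub_sum_scaled[OF F nonzero False] card_F is_subspace_scaled[OF F \<open>K \<subseteq> F\<close>]
    by (intro dim_over_eq_of_card[OF K] is_subspace_sub_sum) (simp_all add: power_add mult_2)
  moreover have "dim_over K {0} = 0"
    by (rule dim_over_eq_of_card[OF K]) (simp_all add: is_subspace_def)
  ultimately show ?thesis
    using False by (simp add: subspace_dist_def scaled_subfield_inter[OF F nonzero False])
qed

lemma flag_dist_scaled:
  assumes K: "is_subfield K"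
    and F: "\<forall>i\<in>{1..r}. is_subfield (F i) \<and> K \<subseteq> F i \<and> card (F i) = card K ^ t i"
    and nonzero: "g \<noteq> 0" "g' \<noteq> 0"
  shows "flag_dist K (flag_scale (map F [1..<Suc r]) g) (flag_scale (map F [1..<Suc r]) g')
    = (\<Sum>i=1..r. if g' / g \<in> F i then 0 else 2 * t i)"
proof -
  have "flag_dist K (flag_scale (map F [1..<Suc r]) g) (flag_scale (map F [1..<Suc r]) g')
      = (\<Sum>i<r. subspace_dist K ((\<lambda>u. u * g) ` F (Suc i)) ((\<lambda>u. u * g') ` F (Suc i)))"
    unfolding flag_dist_def flag_scale_def by (simp del: upt_Suc)
  also have "\<dots> = (\<Sum>i<r. if g' / g \<in> F (Suc i) then 0 else 2 * t (Suc i))"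
    using F by (intro sum.cong refl subspace_dist_scaled_subfield[OF K _ _ _ nonzero]) auto
  also have "\<dots> = (\<Sum>i=1..r. if g' / g \<in> F i then 0 else 2 * t i)"
    by (simp add: sum.atLeast1_atMost_eq)
  finally show ?thesis .
qed

lemma flag_scale_eq_iff:
  assumes "r \<ge> 1" and F: "\<forall>i\<in>{1..r}. is_subfield (F i) \<and> F 1 \<subseteq> F i"
    and nonzero: "g \<noteq> 0" "g' \<noteq> 0"
  shows "flag_scale (map F [1..<Suc r]) g = flag_scale (map F [1..<Suc r]) g' \<longleftrightarrow> g' / g \<in> F 1"
proof -
  have F_Suc: "\<And>i. i < r \<Longrightarrow> is_subfield (F (Suc i))" using F by auto
  have "flag_scale (map F [1..<Suc r]) g = flag_scale (map F [1..<Suc r]) g'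
      \<longleftrightarrow> (\<forall>i<r. (\<lambda>u. u * g) ` F (Suc i) = (\<lambda>u. u * g') ` F (Suc i))"
    by (simp del: upt_Suc add: flag_scale_def list_eq_iff_nth_eq)
  also have "\<dots> \<longleftrightarrow> (\<forall>i<r. g' / g \<in> F (Suc i))"
    by (simp add: scaled_subfield_eq_iff[OF F_Suc nonzero])
  also have "\<dots> \<longleftrightarrow> g' / g \<in> F 1"
    using F \<open>r \<ge> 1\<close> by (auto simp: Suc_le_eq)
  finally show ?thesis .
qed

section \<open>Cyclic groups and orbits\<close>

lemma power_mod_eq:
  fixes x :: "'a::monoid_mult"
  assumes "x ^ m = 1"
  shows "x ^ k = x ^ (k mod m)"
proof -
  have "x ^ k = (x ^ m) ^ (k div m) * x ^ (k mod m)"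
    by (simp flip: power_mult power_add)
  then show ?thesis using assms by simp
qed

lemma one_in_cyc: "1 \<in> cyc x"
  unfolding cyc_def by (auto intro: exI[of _ 0])

lemma zero_notin_cyc: "x \<noteq> 0 \<Longrightarrow> 0 \<notin> cyc x"
  unfolding cyc_def by auto

lemma cyc_divide_closed:
  fixes x :: "'a::{finite,field}"
  assumes "x \<noteq> 0" "y \<in> cyc x" "z \<in> cyc x"
  shows "z / y \<in> cyc x"
proof -
  define N where "N = card (UNIV :: 'a set) - 1"
  have "N \<ge> 1" using card_UNIV_field_gt_1[where 'a='a] by (simp add: N_def)
  then have exponent: "a + (N - 1) * a = N * a" for a by (cases N) simp_all
  obtain a b where y: "y = x ^ a" and z: "z = x ^ b" using assms(2,3) unfolding cyc_def by auto
  have "x ^ a * x ^ ((N - 1) * a) = x ^ (N * a)"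
    by (simp only: exponent flip: power_add)
  also have "\<dots> = (x ^ N) ^ a" by (rule power_mult)
  also have "\<dots> = 1"
    using finite_field_pow_card_minus_one[OF assms(1)] by (simp add: N_def)
  finally have "z / y = x ^ (b + (N - 1) * a)"
    using assms(1) by (simp add: y z power_add field_simps)
  then show ?thesis unfolding cyc_def by blast
qed

lemma cyc_eq_powers_below_mord:
  fixes x :: "'a::{finite,field}"
  assumes "x \<noteq> 0"
  shows "cyc x = {x ^ j | j. j \<le> mord x - 1}"
proof -
  have "\<exists>k. k > 0 \<and> x ^ k = 1"
    using finite_field_pow_card_minus_one[OF assms] card_UNIV_field_gt_1[where 'a='a]
    by (intro exI[of _ "card (UNIV :: 'a set) - 1"]) simp
  then have mord: "mord x > 0" "x ^ mord x = 1"
    unfolding mord_def by (metis (mono_tags, lifting) LeastI_ex)+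
  have "x ^ k \<in> {x ^ j | j. j \<le> mord x - 1}" for k
    using power_mod_eq[OF mord(2), of k] mod_less_divisor[OF mord(1), of k]
    by (intro CollectI exI[of _ "k mod mord x"]) simp
  then show ?thesis unfolding cyc_def by auto
qed

lemma orbit_flag_eq_image_cyc:
  fixes \<beta> :: "'a::{finite,field}"
  assumes "\<beta> \<noteq> 0"
  shows "orbit_flag \<beta> Fl = flag_scale Fl ` cyc \<beta>"
  unfolding orbit_flag_def cyc_eq_powers_below_mord[OF assms] by blast

text \<open>All pairwise distances are values \<open>w (y / x)\<close>, and taking \<open>x = 1\<close> shows that each
  \<open>w z\<close> with \<open>z \<in> G - H\<close> occurs.\<close>
lemma min_flag_dist_image:
  fixes G :: "'a::{finite,field} set" and \<Phi> :: "'a \<Rightarrow> 'b::{finite,field} set list"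
  assumes one: "1 \<in> G" and divide: "\<And>x y. x \<in> G \<Longrightarrow> y \<in> G \<Longrightarrow> y / x \<in> G"
    and eq_iff: "\<And>x y. x \<in> G \<Longrightarrow> y \<in> G \<Longrightarrow> \<Phi> x = \<Phi> y \<longleftrightarrow> y / x \<in> H"
    and dist: "\<And>x y. x \<in> G \<Longrightarrow> y \<in> G \<Longrightarrow> flag_dist K (\<Phi> x) (\<Phi> y) = w (y / x)"
  shows "min_flag_dist K (\<Phi> ` G) = (if G \<subseteq> H then 0 else Min (w ` (G - H)))"
proof (cases "G \<subseteq> H")
  case True
  then have "\<Phi> x = \<Phi> 1" if "x \<in> G" for x using eq_iff[OF one that] that by auto
  then have "\<Phi> ` G = {\<Phi> 1}" using one by blast
  then show ?thesis using True by (simp add: min_flag_dist_def)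
next
  case False
  then obtain z where z: "z \<in> G" "z \<notin> H" by blast
  then have "\<Phi> 1 \<noteq> \<Phi> z" using eq_iff one by simp
  then have "card (\<Phi> ` G) \<noteq> 1"
    using one z by (metis card_1_singletonE image_eqI singletonD)
  moreover have "{flag_dist K A B | A B. A \<in> \<Phi> ` G \<and> B \<in> \<Phi> ` G \<and> A \<noteq> B} = w ` (G - H)"
  proof (intro equalityI subsetI)
    fix d assume "d \<in> {flag_dist K A B | A B. A \<in> \<Phi> ` G \<and> B \<in> \<Phi> ` G \<and> A \<noteq> B}"
    then obtain x y where "x \<in> G" "y \<in> G" "\<Phi> x \<noteq> \<Phi> y" "d = flag_dist K (\<Phi> x) (\<Phi> y)" by auto
    then show "d \<in> w ` (G - H)" using eq_iff dist divide by auto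
  next
    fix d assume "d \<in> w ` (G - H)"
    then obtain y where "y \<in> G" "y \<notin> H" "d = w y" by auto
    then have "d = flag_dist K (\<Phi> 1) (\<Phi> y) \<and> \<Phi> 1 \<noteq> \<Phi> y" using eq_iff dist one by simp
    then show "d \<in> {flag_dist K A B | A B. A \<in> \<Phi> ` G \<and> B \<in> \<Phi> ` G \<and> A \<noteq> B}"
      using one \<open>y \<in> G\<close> by blast
  qed
  ultimately show ?thesis using False by (simp add: min_flag_dist_def)
qed

context
  fixes \<alpha> :: "'a::{finite,field}"
  assumes primitive: "primitive_elem \<alpha>"
begin

lemma primitive_elem_nonzero: "\<alpha> \<noteq> 0"
proof -
  have "\<alpha> \<in> cyc \<alpha>" unfolding cyc_def by (auto intro: exI[of _ 1])
  then show ?thesis using primitive unfolding primitive_elem_def by auto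
qed

lemma primitive_elem_image: "(\<lambda>k. \<alpha> ^ k) ` {..<card (UNIV :: 'a set) - 1} = UNIV - {0}"
proof
  show "(\<lambda>k. \<alpha> ^ k) ` {..<card (UNIV :: 'a set) - 1} \<subseteq> UNIV - {0}"
    using primitive_elem_nonzero by auto
  show "UNIV - {0} \<subseteq> (\<lambda>k. \<alpha> ^ k) ` {..<card (UNIV :: 'a set) - 1}"
  proof
    fix x :: 'a assume "x \<in> UNIV - {0}"
    then obtain k where "x = \<alpha> ^ k"
      using primitive unfolding primitive_elem_def cyc_def by auto
    then have "x = \<alpha> ^ (k mod (card (UNIV :: 'a set) - 1))"
      using power_mod_eq[OF finite_field_pow_card_minus_one[OF primitive_elem_nonzero]] by simp
    moreover have "k mod (card (UNIV :: 'a set) - 1) < card (UNIV :: 'a set) - 1"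
      using card_UNIV_field_gt_1[where 'a='a] by simp
    ultimately show "x \<in> (\<lambda>k. \<alpha> ^ k) ` {..<card (UNIV :: 'a set) - 1}" by blast
  qed
qed

lemma inj_on_primitive_elem_pow: "inj_on (\<lambda>k. \<alpha> ^ k) {..<card (UNIV :: 'a set) - 1}"
  by (rule eq_card_imp_inj_on) (use primitive_elem_image in \<open>simp_all add: card_Diff_singleton\<close>)

lemma primitive_elem_pow_eq_one_iff: "\<alpha> ^ k = 1 \<longleftrightarrow> card (UNIV :: 'a set) - 1 dvd k"
proof
  let ?N = "card (UNIV :: 'a set) - 1"
  have N_pos: "?N > 0" using card_UNIV_field_gt_1[where 'a='a] by simp
  assume "\<alpha> ^ k = 1"
  then have "\<alpha> ^ (k mod ?N) = \<alpha> ^ 0"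
    using power_mod_eq[OF finite_field_pow_card_minus_one[OF primitive_elem_nonzero], of k] by simp
  then have "k mod ?N = 0"
    by (rule inj_onD[OF inj_on_primitive_elem_pow]) (use N_pos in simp_all)
  then show "?N dvd k" by auto
next
  assume "card (UNIV :: 'a set) - 1 dvd k"
  then obtain j where "k = (card (UNIV :: 'a set) - 1) * j" by (rule dvdE)
  then show "\<alpha> ^ k = 1"
    by (simp only: power_mult finite_field_pow_card_minus_one[OF primitive_elem_nonzero] power_one)
qed

context
  fixes m :: nat
  assumes m_dvd: "m - 1 dvd card (UNIV :: 'a set) - 1" and m_gt_1: "m > 1"
begin

lemma primitive_pow_in_subfield_pow_iff:
  "\<alpha> ^ k \<in> subfield_pow m \<longleftrightarrow> (card (UNIV :: 'a set) - 1) div (m - 1) dvd k"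
proof -
  define c where "c = (card (UNIV :: 'a set) - 1) div (m - 1)"
  have N: "card (UNIV :: 'a set) - 1 = c * (m - 1)" using m_dvd by (simp add: c_def)
  have "(\<alpha> ^ k) ^ m = \<alpha> ^ (k * (m - 1)) * \<alpha> ^ k"
    using m_gt_1 by (simp flip: power_mult power_add) (simp add: algebra_simps)
  then have "\<alpha> ^ k \<in> subfield_pow m \<longleftrightarrow> \<alpha> ^ (k * (m - 1)) = 1"
    using primitive_elem_nonzero by (simp add: subfield_pow_def)
  also have "\<dots> \<longleftrightarrow> c * (m - 1) dvd k * (m - 1)"
    unfolding primitive_elem_pow_eq_one_iff N by (rule refl)
  also have "\<dots> \<longleftrightarrow> c dvd k" using m_gt_1 by simp
  finally show ?thesis unfolding c_def .
qed

lemma subfield_pow_eq_insert_powers: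
  "subfield_pow m = insert 0 ((\<lambda>j. \<alpha> ^ ((card (UNIV :: 'a set) - 1) div (m - 1) * j)) ` {..<m - 1})"
proof -
  define c where "c = (card (UNIV :: 'a set) - 1) div (m - 1)"
  have N: "card (UNIV :: 'a set) - 1 = c * (m - 1)" using m_dvd by (simp add: c_def)
  have mem: "\<alpha> ^ k \<in> subfield_pow m \<longleftrightarrow> c dvd k" for k
    using primitive_pow_in_subfield_pow_iff unfolding c_def .
  have "subfield_pow m = insert 0 ((\<lambda>j. \<alpha> ^ (c * j)) ` {..<m - 1})"
  proof (intro equalityI subsetI)
    fix x :: 'a assume x: "x \<in> subfield_pow m"
    show "x \<in> insert 0 ((\<lambda>j. \<alpha> ^ (c * j)) ` {..<m - 1})"
    proof (cases "x = 0")
      case False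
      then obtain k where k: "k < card (UNIV :: 'a set) - 1" "x = \<alpha> ^ k"
        using primitive_elem_image by blast
      have "c dvd k" using x mem k(2) by simp
      then obtain j where j: "k = c * j" by (rule dvdE)
      have "j < m - 1" using k(1) unfolding N j by simp
      then show ?thesis by (intro insertI2 image_eqI[of _ _ j]) (simp_all add: k(2) j)
    qed (simp only: insertI1)
  next
    fix x :: 'a assume "x \<in> insert 0 ((\<lambda>j. \<alpha> ^ (c * j)) ` {..<m - 1})"
    then show "x \<in> subfield_pow m"
    proof (rule insertE)
      assume "x = 0"
      then show ?thesis using m_gt_1 by (simp add: subfield_pow_def)
    next
      assume "x \<in> (\<lambda>j. \<alpha> ^ (c * j)) ` {..<m - 1}"
      then obtain j where "x = \<alpha> ^ (c * j)" by blast
      then show ?thesis using mem[of "c * j"] by simp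
    qed
  qed
  then show ?thesis unfolding c_def .
qed

lemma card_subfield_pow: "card (subfield_pow m :: 'a set) = m"
proof -
  define c where "c = (card (UNIV :: 'a set) - 1) div (m - 1)"
  have N: "card (UNIV :: 'a set) - 1 = c * (m - 1)" using m_dvd by (simp add: c_def)
  then have c_pos: "c > 0" using card_UNIV_field_gt_1[where 'a='a] by (cases c) auto
  have "inj_on (\<lambda>j. \<alpha> ^ (c * j)) {..<m - 1}"
  proof (rule inj_onI)
    fix i j assume ij: "i \<in> {..<m - 1}" "j \<in> {..<m - 1}" and eq: "\<alpha> ^ (c * i) = \<alpha> ^ (c * j)"
    have "c * i \<in> {..<card (UNIV :: 'a set) - 1}" "c * j \<in> {..<card (UNIV :: 'a set) - 1}"
      using ij c_pos unfolding N by simp_all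
    then have "c * i = c * j" by (rule inj_onD[OF inj_on_primitive_elem_pow eq])
    then show "i = j" using c_pos by simp
  qed
  moreover have "0 \<notin> (\<lambda>j. \<alpha> ^ (c * j)) ` {..<m - 1}" using primitive_elem_nonzero by auto
  ultimately show ?thesis
    using m_gt_1 subfield_pow_eq_insert_powers unfolding c_def[symmetric] by (simp add: card_image)
qed

end

end

section \<open>Divisibility chains\<close>

lemma power_minus_one_dvd:
  fixes x :: nat
  assumes "a dvd b"
  shows "x ^ a - 1 dvd x ^ b - 1"
proof (cases "x = 0")
  case False
  obtain s where b: "b = a * s" using assms by blast
  have "int (x ^ a) - 1 dvd int (x ^ a) ^ s - 1"
    using power_diff_1_eq[of "int (x ^ a)" s] by simp
  then have "int (x ^ a - 1) dvd int (x ^ b - 1)"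
    using False by (simp add: b power_mult of_nat_diff)
  then show ?thesis by (simp only: int_dvd_int_iff)
qed (simp add: power_0_left)

lemma dvd_chain_trans:
  fixes t :: "nat \<Rightarrow> nat"
  assumes chain: "\<forall>i\<in>{1..<r}. t i dvd t (Suc i)" and "1 \<le> i" "i \<le> j" "j \<le> r"
  shows "t i dvd t j"
  using \<open>i \<le> j\<close>
proof (induction j rule: dec_induct)
  case (step k)
  then have "k \<in> {1..<r}" using \<open>1 \<le> i\<close> \<open>j \<le> r\<close> by simp
  then show ?case using step.IH chain dvd_trans by blast
qed simp

lemma exists_first_change:
  fixes L :: "nat \<Rightarrow> 'b"
  assumes "r \<ge> 1"
  shows "\<exists>j\<in>{2..Suc r}. (\<forall>k\<in>{2..<j}. L k = L 1) \<and> (j \<le> r \<longrightarrow> L j \<noteq> L 1)"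
proof -
  define P where "P j \<longleftrightarrow> 2 \<le> j \<and> (r < j \<or> L j \<noteq> L 1)" for j
  define j where "j = (LEAST j. P j)"
  have "P (Suc r)" using assms by (simp add: P_def)
  then have "P j" "j \<le> Suc r" unfolding j_def by (auto intro: LeastI Least_le)
  moreover have "\<not> P k" if "k < j" for k using that not_less_Least unfolding j_def by blast
  ultimately show ?thesis unfolding P_def by (intro bexI[of _ j]) auto
qed

lemma sum_atLeastLessThan_strict_mono:
  fixes t :: "nat \<Rightarrow> nat"
  assumes "1 \<le> a" "a < b" "t a > 0"
  shows "(\<Sum>i=1..<a. t i) < (\<Sum>i=1..<b. t i)"
proof -
  have "(\<Sum>i=1..<b. t i) = (\<Sum>i=1..<a. t i) + (\<Sum>i=a..<b. t i)"
    using assms by (simp add: sum.atLeastLessThan_concat)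
  moreover have "t a \<le> (\<Sum>i=a..<b. t i)" using assms by (intro member_le_sum) auto
  ultimately show ?thesis using assms by simp
qed

locale dvd_chain_first_change =
  fixes L :: "nat \<Rightarrow> nat" and l r j\<^sub>0 :: nat
  assumes chain: "\<And>i j. 1 \<le> i \<Longrightarrow> i \<le> j \<Longrightarrow> j \<le> r \<Longrightarrow> L j dvd L i"
    and l_dvd: "\<And>i. l dvd L i"
    and first_change: "j\<^sub>0 \<in> {2..Suc r}" "\<forall>k\<in>{2..<j\<^sub>0}. L k = L 1" "j\<^sub>0 \<le> r \<longrightarrow> L j\<^sub>0 \<noteq> L 1"
begin

text \<open>For \<open>L i = lcm l c\<^sub>i\<close>, \<open>weight t k\<close> is the distance between the Galois flag and its
  scaling by \<open>\<alpha> ^ (l * k)\<close>.\<close>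
abbreviation weight :: "(nat \<Rightarrow> nat) \<Rightarrow> nat \<Rightarrow> nat" where
  "weight t k \<equiv> \<Sum>i=1..r. if L i dvd l * k then 0 else 2 * t i"

lemma r_ge_1: "r \<ge> 1"
  using first_change(1) by simp

lemma before_first_change: "1 \<le> i \<Longrightarrow> i < j\<^sub>0 \<Longrightarrow> L i = L 1"
  using first_change(2) by (cases "i = 1") auto

lemma last_eq_of_first_eq: "L 1 = l \<Longrightarrow> L r = l"
  using chain[of 1 r] l_dvd[of r] r_ge_1 by (simp add: dvd_antisym)

lemma first_change_eq_Suc_iff: "j\<^sub>0 = Suc r \<longleftrightarrow> L 1 = L r"
proof
  assume "j\<^sub>0 = Suc r"
  then show "L 1 = L r" using before_first_change[of r] r_ge_1 by simp
next
  assume "L 1 = L r"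
  then have "j\<^sub>0 \<le> r \<Longrightarrow> L j\<^sub>0 = L 1"
    using chain[of 1 j\<^sub>0] chain[of j\<^sub>0 r] first_change(1) by (simp add: dvd_antisym)
  then show "j\<^sub>0 = Suc r" using first_change(1,3) by fastforce
qed

lemma first_change_iff:
  assumes j: "j \<in> {2..r}"
  shows "(L 1 \<noteq> L r \<and> L 1 \<noteq> L j \<and> (\<forall>k\<in>{2..<j}. L 1 = L k)) \<longleftrightarrow> j = j\<^sub>0"
proof
  assume *: "L 1 \<noteq> L r \<and> L 1 \<noteq> L j \<and> (\<forall>k\<in>{2..<j}. L 1 = L k)"
  have "\<not> j < j\<^sub>0"
  proof
    assume "j < j\<^sub>0"
    then have "L j = L 1" using j by (intro before_first_change) auto
    then show False using * by simp
  qed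
  moreover have "\<not> j\<^sub>0 < j"
  proof
    assume "j\<^sub>0 < j"
    then have "L 1 = L j\<^sub>0" "j\<^sub>0 \<le> r" using * j first_change(1) by auto
    then show False using first_change(3) by simp
  qed
  ultimately show "j = j\<^sub>0" by simp
next
  assume "j = j\<^sub>0"
  then show "L 1 \<noteq> L r \<and> L 1 \<noteq> L j \<and> (\<forall>k\<in>{2..<j}. L 1 = L k)"
    using j first_change first_change_eq_Suc_iff by auto
qed

lemma weight_lower_bound:
  fixes t :: "nat \<Rightarrow> nat"
  assumes "\<not> L 1 dvd l * k"
  shows "2 * (\<Sum>i=1..<j\<^sub>0. t i) \<le> weight t k"
proof -
  have "2 * (\<Sum>i=1..<j\<^sub>0. t i) = (\<Sum>i=1..<j\<^sub>0. if L i dvd l * k then 0 else 2 * t i)"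
    unfolding sum_distrib_left
  proof (intro sum.cong refl)
    fix i assume "i \<in> {1..<j\<^sub>0}"
    then have "L i = L 1" by (intro before_first_change) auto
    then show "2 * t i = (if L i dvd l * k then 0 else 2 * t i)" using assms by simp
  qed
  also have "\<dots> \<le> weight t k" using first_change(1) by (intro sum_mono2) auto
  finally show ?thesis .
qed

text \<open>The bound is attained at \<open>l * k = L j\<^sub>0\<close> (or \<open>k = 1\<close> if \<open>L\<close> never changes).\<close>
lemma weight_attains_lower_bound:
  fixes t :: "nat \<Rightarrow> nat"
  assumes "L 1 \<noteq> l"
  obtains k where "\<not> L 1 dvd l * k" "weight t k = 2 * (\<Sum>i=1..<j\<^sub>0. t i)"
proof
  define k where "k = (if j\<^sub>0 \<le> r then L j\<^sub>0 else l) div l"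
  have l_k: "l * k = (if j\<^sub>0 \<le> r then L j\<^sub>0 else l)" using l_dvd[of j\<^sub>0] by (simp add: k_def)
  show not_dvd: "\<not> L 1 dvd l * k"
  proof
    assume dvd: "L 1 dvd l * k"
    show False
    proof (cases "j\<^sub>0 \<le> r")
      case True
      then have "L j\<^sub>0 = L 1" using dvd l_k chain[of 1 j\<^sub>0] first_change(1) by (simp add: dvd_antisym)
      then show False using first_change(3) True by simp
    next
      case False
      then show False using dvd l_k l_dvd[of 1] assms by (simp add: dvd_antisym)
    qed
  qed
  have "weight t k = (\<Sum>i=1..r. if i < j\<^sub>0 then 2 * t i else 0)"
  proof (intro sum.cong refl)
    fix i assume i: "i \<in> {1..r}"
    show "(if L i dvd l * k then 0 else 2 * t i) = (if i < j\<^sub>0 then 2 * t i else 0)"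
    proof (cases "i < j\<^sub>0")
      case True
      then show ?thesis using before_first_change[of i] i not_dvd by simp
    next
      case False
      then have "L i dvd l * k" using chain[of j\<^sub>0 i] i first_change(1) l_k by auto
      then show ?thesis using False by simp
    qed
  qed
  also have "\<dots> = (\<Sum>i=1..<j\<^sub>0. 2 * t i)"
    using first_change(1) by (intro sum.mono_neutral_cong_right) auto
  finally show "weight t k = 2 * (\<Sum>i=1..<j\<^sub>0. t i)" by (simp add: sum_distrib_left)
qed

lemma Min_weight:
  fixes t :: "nat \<Rightarrow> nat"
  assumes "L 1 \<noteq> l"
  shows "Min (weight t ` {k. \<not> L 1 dvd l * k}) = 2 * (\<Sum>i=1..<j\<^sub>0. t i)"
proof (rule Min_eqI)
  have "weight t k \<le> (\<Sum>i=1..r. 2 * t i)" for k by (rule sum_mono) simp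
  then have "weight t ` {k. \<not> L 1 dvd l * k} \<subseteq> {..\<Sum>i=1..r. 2 * t i}" by blast
  then show "finite (weight t ` {k. \<not> L 1 dvd l * k})" by (rule finite_subset) simp
  show "2 * (\<Sum>i=1..<j\<^sub>0. t i) \<le> w" if "w \<in> weight t ` {k. \<not> L 1 dvd l * k}" for w
    using that weight_lower_bound by blast
  obtain k where "\<not> L 1 dvd l * k" "weight t k = 2 * (\<Sum>i=1..<j\<^sub>0. t i)"
    using weight_attains_lower_bound[OF assms] .
  then show "2 * (\<Sum>i=1..<j\<^sub>0. t i) \<in> weight t ` {k. \<not> L 1 dvd l * k}" by force
qed

lemma distance_cases:
  fixes t :: "nat \<Rightarrow> nat"
  assumes t_pos: "\<forall>i\<in>{1..r}. t i > 0"
    and d: "d = (if L 1 = l then 0 else 2 * (\<Sum>i=1..<j\<^sub>0. t i))"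
  shows "(d = 0 \<longleftrightarrow> L 1 = l \<and> L r = l)
    \<and> (d = 2 * (\<Sum>i=1..r. t i) \<longleftrightarrow> L 1 = L r \<and> L r \<noteq> l)
    \<and> (\<forall>j\<in>{2..r}. d = 2 * (\<Sum>i=1..<j. t i) \<longleftrightarrow>
          (L 1 \<noteq> L r \<and> L 1 \<noteq> L j \<and> (\<forall>k\<in>{2..<j}. L 1 = L k)))"
proof -
  define S where "S j = (\<Sum>i=1..<j. t i)" for j
  have S_less: "S a < S b" if "1 \<le> a" "a < b" "b \<le> Suc r" for a b
    unfolding S_def using that t_pos by (intro sum_atLeastLessThan_strict_mono) auto
  have S_pos: "S j > 0" if "2 \<le> j" "j \<le> Suc r" for j
    using S_less[of 1 j] that by (simp add: S_def)
  have S_eq_iff: "S a = S b \<longleftrightarrow> a = b" if "a \<in> {1..Suc r}" "b \<in> {1..Suc r}" for a b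
    using S_less[of a b] S_less[of b a] that by (cases a b rule: linorder_cases) auto
  have S_last: "(\<Sum>i=1..r. t i) = S (Suc r)"
    by (simp add: S_def atLeastLessThanSuc_atLeastAtMost)
  have S_fold: "(\<Sum>i=1..<j. t i) = S j" for j by (simp add: S_def)
  show ?thesis
  proof (cases "L 1 = l")
    case True
    then show ?thesis
      unfolding S_last S_fold using d last_eq_of_first_eq S_pos r_ge_1 by auto
  next
    case False
    then have d: "d = 2 * S j\<^sub>0" using d unfolding S_fold by simp
    have "S j\<^sub>0 > 0" using S_pos first_change(1) by simp
    moreover have "d = 2 * S (Suc r) \<longleftrightarrow> L 1 = L r"
      using d S_eq_iff[of j\<^sub>0 "Suc r"] first_change(1) first_change_eq_Suc_iff by simp
    moreover have "d = 2 * S j \<longleftrightarrow> j = j\<^sub>0" if "j \<in> {2..r}" for j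
      using d S_eq_iff[of j\<^sub>0 j] first_change(1) that by auto
    ultimately show ?thesis unfolding S_last S_fold using False d first_change_iff by auto
  qed
qed

end

section \<open>Galois flags\<close>

locale galois_flag =
  fixes q n r :: nat and t :: "nat \<Rightarrow> nat" and \<alpha> :: "'a::{finite,field}"
  assumes prime_power: "prime_power q"
    and card_UNIV: "card (UNIV :: 'a set) = q ^ n"
    and primitive: "primitive_elem \<alpha>"
    and r_pos: "r \<ge> 1"
    and t_dvd_n: "\<forall>i\<in>{1..r}. t i dvd n"
    and t_dvd_Suc: "\<forall>i\<in>{1..<r}. t i dvd t (Suc i)"
begin

abbreviation cofactor :: "nat \<Rightarrow> nat" where
  "cofactor i \<equiv> (q ^ n - 1) div (q ^ t i - 1)"

lemma n_pos: "n > 0"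
  using card_UNIV_field_gt_1[where 'a='a] card_UNIV by (cases n) auto

lemma q_gt_1: "q > 1"
proof (rule ccontr)
  assume "\<not> q > 1"
  then have "q ^ n \<le> 1" using power_le_one[of q n] by simp
  then show False using card_UNIV_field_gt_1[where 'a='a] card_UNIV by simp
qed

lemma t_pos: "\<forall>i\<in>{1..r}. t i > 0"
proof
  fix i assume "i \<in> {1..r}"
  then have "t i dvd n" using t_dvd_n by blast
  then show "t i > 0" using n_pos by (cases "t i") auto
qed

lemma is_subfield_power: "is_subfield (subfield_pow (q ^ m) :: 'a set)"
proof -
  obtain p e where p: "prime p" and q: "q = p ^ e"
    using prime_power unfolding prime_power_def by blast
  have "CHAR('a) = p"
    using CHAR_eq_of_card[OF p, of "e * n"] card_UNIV by (simp add: q power_mult)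
  then show ?thesis
    using p by (intro is_subfield_subfield_pow[of _ "e * m"]) (simp_all add: q power_mult)
qed

context
  fixes m :: nat
  assumes m_dvd: "m dvd n"
begin

lemma subfield_power_conditions: "q ^ m - 1 dvd card (UNIV :: 'a set) - 1" "q ^ m > 1"
proof -
  show "q ^ m - 1 dvd card (UNIV :: 'a set) - 1"
    using power_minus_one_dvd[OF m_dvd] card_UNIV by simp
  have "m > 0" using m_dvd n_pos by (cases m) auto
  then show "q ^ m > 1" by (rule one_less_power[OF q_gt_1])
qed

lemma card_subfield_power: "card (subfield_pow (q ^ m) :: 'a set) = q ^ m"
  by (rule card_subfield_pow[OF primitive subfield_power_conditions])

lemma primitive_pow_in_subfield_power_iff:
  "\<alpha> ^ k \<in> subfield_pow (q ^ m) \<longleftrightarrow> (q ^ n - 1) div (q ^ m - 1) dvd k"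
  using primitive_pow_in_subfield_pow_iff[OF primitive subfield_power_conditions] card_UNIV by simp

end

lemma subfield_flag_mono:
  assumes "1 \<le> i" "i \<le> j" "j \<le> r"
  shows "subfield_pow (q ^ t i) \<subseteq> (subfield_pow (q ^ t j) :: 'a set)"
  using subfield_pow_mono dvd_chain_trans[OF t_dvd_Suc assms] by blast

lemma lcm_cofactor_chain:
  assumes "1 \<le> i" "i \<le> j" "j \<le> r"
  shows "lcm l (cofactor j) dvd lcm l (cofactor i)"
proof -
  have "\<alpha> ^ cofactor i \<in> subfield_pow (q ^ t i)"
    using primitive_pow_in_subfield_power_iff t_dvd_n assms by simp
  then have "\<alpha> ^ cofactor i \<in> subfield_pow (q ^ t j)"
    using subfield_flag_mono[OF assms] by blast
  then have "cofactor j dvd cofactor i"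
    using primitive_pow_in_subfield_power_iff t_dvd_n assms by simp
  then show ?thesis by (meson dvd_lcm1 dvd_lcm2 dvd_trans lcm_least)
qed

abbreviation flag :: "'a set list" where
  "flag \<equiv> map (\<lambda>i. subfield_pow (q ^ t i)) [1..<Suc r]"

lemma subfield_flag_dims:
  "\<forall>i\<in>{1..r}. is_subfield (subfield_pow (q ^ t i) :: 'a set)
     \<and> subfield_pow q \<subseteq> (subfield_pow (q ^ t i) :: 'a set)
     \<and> card (subfield_pow (q ^ t i) :: 'a set) = card (subfield_pow q :: 'a set) ^ t i"
proof
  fix i assume "i \<in> {1..r}"
  then have "t i dvd n" using t_dvd_n by blast
  moreover have "subfield_pow q \<subseteq> (subfield_pow (q ^ t i) :: 'a set)"
    using subfield_pow_mono[of 1 "t i" q] by simp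
  moreover have "card (subfield_pow q :: 'a set) = q" using card_subfield_power[of 1] by simp
  ultimately show "is_subfield (subfield_pow (q ^ t i) :: 'a set)
     \<and> subfield_pow q \<subseteq> (subfield_pow (q ^ t i) :: 'a set)
     \<and> card (subfield_pow (q ^ t i) :: 'a set) = card (subfield_pow q :: 'a set) ^ t i"
    using is_subfield_power card_subfield_power by simp
qed

lemma min_flag_dist_orbit_cyc:
  assumes "\<beta> \<noteq> 0"
  shows "min_flag_dist (subfield_pow q) (orbit_flag \<beta> flag)
    = (if cyc \<beta> \<subseteq> subfield_pow (q ^ t 1) then 0
       else Min ((\<lambda>z. \<Sum>i=1..r. if z \<in> subfield_pow (q ^ t i) then 0 else 2 * t i)
                 ` (cyc \<beta> - subfield_pow (q ^ t 1))))"
  unfolding orbit_flag_eq_image_cyc[OF assms]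
proof (rule min_flag_dist_image)
  have nonzero: "x \<in> cyc \<beta> \<Longrightarrow> x \<noteq> 0" for x using zero_notin_cyc[OF assms] by blast
  have F_mono: "\<forall>i\<in>{1..r}. is_subfield (subfield_pow (q ^ t i) :: 'a set)
      \<and> subfield_pow (q ^ t 1) \<subseteq> (subfield_pow (q ^ t i) :: 'a set)"
    using is_subfield_power subfield_flag_mono by simp
  show "1 \<in> cyc \<beta>" by (rule one_in_cyc)
  show "y / x \<in> cyc \<beta>" if "x \<in> cyc \<beta>" "y \<in> cyc \<beta>" for x y
    using cyc_divide_closed[OF assms] that .
  show "flag_scale flag x = flag_scale flag y \<longleftrightarrow> y / x \<in> subfield_pow (q ^ t 1)"
    if "x \<in> cyc \<beta>" "y \<in> cyc \<beta>" for x y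
    using flag_scale_eq_iff[OF r_pos F_mono] nonzero that by blast
  show "flag_dist (subfield_pow q) (flag_scale flag x) (flag_scale flag y)
      = (\<Sum>i=1..r. if y / x \<in> subfield_pow (q ^ t i) then 0 else 2 * t i)"
    if "x \<in> cyc \<beta>" "y \<in> cyc \<beta>" for x y
    using flag_dist_scaled[OF is_subfield_power[of 1, simplified] subfield_flag_dims] nonzero that
    by blast
qed

lemma primitive_pow_in_flag_iff:
  assumes "i \<in> {1..r}"
  shows "\<alpha> ^ (l * k) \<in> subfield_pow (q ^ t i) \<longleftrightarrow> lcm l (cofactor i) dvd l * k"
  using primitive_pow_in_subfield_power_iff[of "t i"] t_dvd_n assms by (simp add: lcm_least_iff)

lemma min_flag_dist_orbit:
  assumes \<beta>: "\<beta> \<noteq> 0" "cyc \<beta> = cyc (\<alpha> ^ l)"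
  shows "min_flag_dist (subfield_pow q) (orbit_flag \<beta> flag)
    = (if lcm l (cofactor 1) = l then 0
       else Min ((\<lambda>k. \<Sum>i=1..r. if lcm l (cofactor i) dvd l * k then 0 else 2 * t i)
                 ` {k. \<not> lcm l (cofactor 1) dvd l * k}))"
proof -
  have cyc_\<beta>: "cyc \<beta> = range (\<lambda>k. \<alpha> ^ (l * k))"
    unfolding \<beta>(2) by (auto simp: cyc_def power_mult)
  have mem_1: "\<alpha> ^ (l * k) \<in> subfield_pow (q ^ t 1) \<longleftrightarrow> lcm l (cofactor 1) dvd l * k" for k
    using primitive_pow_in_flag_iff r_pos by simp
  have "cyc \<beta> \<subseteq> subfield_pow (q ^ t 1) \<longleftrightarrow> (\<forall>k. lcm l (cofactor 1) dvd l * k)"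
    unfolding cyc_\<beta> using mem_1 by blast
  also have "\<dots> \<longleftrightarrow> lcm l (cofactor 1) = l"
    by (metis dvd_antisym dvd_lcm1 dvd_mult2 dvd_refl mult.right_neutral)
  finally have trivial_iff: "cyc \<beta> \<subseteq> subfield_pow (q ^ t 1) \<longleftrightarrow> lcm l (cofactor 1) = l" .
  have "cyc \<beta> - subfield_pow (q ^ t 1) = (\<lambda>k. \<alpha> ^ (l * k)) ` {k. \<not> lcm l (cofactor 1) dvd l * k}"
    unfolding cyc_\<beta> using mem_1 by blast
  moreover have "(\<Sum>i=1..r. if \<alpha> ^ (l * k) \<in> subfield_pow (q ^ t i) then 0 else 2 * t i)
      = (\<Sum>i=1..r. if lcm l (cofactor i) dvd l * k then 0 else 2 * t i)" for k
    using primitive_pow_in_flag_iff by (intro sum.cong) auto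
  ultimately show ?thesis
    unfolding min_flag_dist_orbit_cyc[OF \<beta>(1)] trivial_iff by (simp add: image_image)
qed

end

theorem theorem4p15:
  fixes q n r l :: nat and t :: "nat \<Rightarrow> nat"
    and \<alpha> \<beta> :: "'a::{finite,field}"
  assumes "prime_power q"
    and "card (UNIV :: 'a set) = q ^ n"
    and "primitive_elem \<alpha>"
    and "r \<ge> 1"
    and "1 \<le> t 1"
    and "\<forall>i\<in>{1..<r}. t i < t (Suc i)"
    and "t r < n"
    and "\<forall>i\<in>{1..r}. t i dvd n"
    and "\<forall>i\<in>{1..<r}. t i dvd t (Suc i)"
    and "\<beta> \<noteq> 0"
    and "l dvd q ^ n - 1"
    and "cyc \<beta> = cyc (\<alpha> ^ l)"
  defines "L \<equiv> (\<lambda>i. lcm l ((q ^ n - 1) div (q ^ t i - 1)))"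
    and "d \<equiv> min_flag_dist (subfield_pow q) (orbit_flag \<beta> (map (\<lambda>i. subfield_pow (q ^ t i)) [1..<Suc r]))"
  shows "(d = 0 \<longleftrightarrow> L 1 = l \<and> L r = l)
    \<and> (d = 2 * (\<Sum>i=1..r. t i) \<longleftrightarrow> L 1 = L r \<and> L r \<noteq> l)
    \<and> (\<forall>j\<in>{2..r}. d = 2 * (\<Sum>i=1..<j. t i) \<longleftrightarrow>
          (L 1 \<noteq> L r \<and> L 1 \<noteq> L j \<and> (\<forall>k\<in>{2..<j}. L 1 = L k)))"
proof -
  interpret galois_flag q n r t \<alpha>
    using assms(1-4,8,9) by unfold_locales
  have chain: "\<And>i j. 1 \<le> i \<Longrightarrow> i \<le> j \<Longrightarrow> j \<le> r \<Longrightarrow> L j dvd L i"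
    unfolding L_def by (rule lcm_cofactor_chain)
  obtain j\<^sub>0 where j\<^sub>0: "j\<^sub>0 \<in> {2..Suc r}" "\<forall>k\<in>{2..<j\<^sub>0}. L k = L 1" "j\<^sub>0 \<le> r \<longrightarrow> L j\<^sub>0 \<noteq> L 1"
    using exists_first_change[OF r_pos] by blast
  interpret dvd_chain_first_change L l r j\<^sub>0
    using chain j\<^sub>0 by unfold_locales (auto simp: L_def)
  have "d = (if L 1 = l then 0 else Min (weight t ` {k. \<not> L 1 dvd l * k}))"
    unfolding d_def L_def using min_flag_dist_orbit[OF assms(10,12)] by simp
  then have "d = (if L 1 = l then 0 else 2 * (\<Sum>i=1..<j\<^sub>0. t i))"
    using Min_weight by (cases "L 1 = l") simp_all
  then show ?thesis by (rule distance_cases[OF t_pos])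
qed

end
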